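(* Let $H\le G_{d,k}$. Then $\widetilde{\mathfrak X}_{d,k}(H)$ is a simplicial complex (every cell has multiplicity $1$) if and only if $H$ satisfies the intersection property: for every nonempty $J\subseteq[\![d]\!]$ and every $g\in G_{d,k}$, $$\bigcap_{i\in J}\mathcal A_{[K_{\widehat i}g]_H}=\mathcal A_{[K_{\widehat J}g]_H}.$$ If moreover $H$ is normal in $G_{d,k}$, then $\widetilde{\mathfrak X}_{d,k}(H)$ is a simplicial complex if and only if this equality holds for every nonempty $J$ with $g=e$.
   Context: Fix $d,k\ge1$, $[\![d]\!]=\{0,\dots,d\}$. $G_{d,k}=\langle\alpha_0,\dots,\alpha_d\mid\alpha_i^k=e\rangle$; for $J\subseteq[\![d]\!]$, $K_J=\langle\alpha_j:j\in J\rangle$, $\widehat J=[\![d]\!]\setminus J$, $\widehat i=\widehat{\{i\}}$. For $H\le G_{d,k}$, $[K_{\widehat J}g]_H=\{K_{\widehat J}gh:h\in H\}$ and $\mathcal A_{[K_{\widehat J}g]_H}=\{g'\in G_{d,k}:[K_{\widehat J}g']_H=[K_{\widehat J}g]_H\}$. The multicomplex $\widetilde{\mathfrak X}_{d,k}(H)$ has as multicells of dimension $|J|-1$ the classes $[K_{\widehat J}g]_H$, the multicell $[K_{\widehat J}g]_H$ lying over the cell $\Phi([K_{\widehat J}g]_H)=\{[K_{\widehat i}g]_H:i\in J\}$ (well defined); the multiplicity of a cell $\sigma$ is $|\Phi^{-1}(\sigma)|$. Thus $\widetilde{\mathfrak X}_{d,k}(H)$ is a simplicial complex iff $\Phi$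 is injective. *)

theory Defs
  imports "HOL-Algebra.Algebra"
begin

text \<open>The free product G_{d,k} of d+1 cyclic groups of order k, modelled by
  reduced words: lists of letters (i,m) meaning alpha_i^m, with i \<le> d,
  0 < m < k, and adjacent letters having distinct indices.\<close>

type_synonym word = "(nat \<times> nat) list"

fun push :: "nat \<Rightarrow> nat \<times> nat \<Rightarrow> word \<Rightarrow> word" where
  "push k (i, m) [] = [(i, m)]"
| "push k (i, m) ((j, n) # w) =
     (if i = j then (if (m + n) mod k = 0 then w else (i, (m + n) mod k) # w)
      else (i, m) # (j, n) # w)"

definition reduced :: "nat \<Rightarrow> nat \<Rightarrow> word \<Rightarrow> bool" where
  "reduced d k w \<longleftrightarrow> (\<forall>(i, m) \<in> set w. i \<le> d \<and> 0 < m \<and> m < k)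
      \<and> successively (\<lambda>a b. fst a \<noteq> fst b) w"

definition Gdk :: "nat \<Rightarrow> nat \<Rightarrow> word monoid" where
  "Gdk d k = \<lparr>carrier = {w. reduced d k w}, monoid.mult = (\<lambda>x y. foldr (push k) x y), one = []\<rparr>"

definition alpha :: "nat \<Rightarrow> nat \<Rightarrow> word" where
  "alpha k i = (if 1 < k then [(i, 1)] else [])"

definition Ksub :: "nat \<Rightarrow> nat \<Rightarrow> nat set \<Rightarrow> word set" where
  "Ksub d k J = generate (Gdk d k) (alpha k ` J)"

definition cls :: "nat \<Rightarrow> nat \<Rightarrow> word set \<Rightarrow> nat set \<Rightarrow> word \<Rightarrow> word set set" where
  "cls d k H J g = {Ksub d k ({0..d} - J) #>\<^bsub>Gdk d k\<^esub> (g \<otimes>\<^bsub>Gdk d k\<^esub> h) | h. h \<in> H}"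

definition Acls :: "nat \<Rightarrow> nat \<Rightarrow> word set \<Rightarrow> nat set \<Rightarrow> word \<Rightarrow> word set" where
  "Acls d k H J g = {g' \<in> carrier (Gdk d k). cls d k H J g' = cls d k H J g}"

definition multicells :: "nat \<Rightarrow> nat \<Rightarrow> word set \<Rightarrow> (nat set \<times> word set set) set" where
  "multicells d k H = {(J, cls d k H J g) | J g. J \<noteq> {} \<and> J \<subseteq> {0..d} \<and> g \<in> carrier (Gdk d k)}"

text \<open>The map Phi from multicells to cells; a cell is a set of vertices
  [K_{hat i} g]_H, each tagged by its type i.\<close>
definition Phi :: "nat \<Rightarrow> nat \<Rightarrow> word set \<Rightarrow> nat set \<times> word set set \<Rightarrow> (nat \<times> word set set) set" where
  "Phi d k H c = (let g = (SOME g. g \<in> carrier (Gdk d k) \<and> cls d k H (fst c) g = snd c)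
                  in {(i, cls d k H {i} g) | i. i \<in> fst c})"

definition is_simplicial :: "nat \<Rightarrow> nat \<Rightarrow> word set \<Rightarrow> bool" where
  "is_simplicial d k H \<longleftrightarrow> inj_on (Phi d k H) (multicells d k H)"

end

theory Submission
  imports Defs
begin

text \<open>Two classes [K g']_H and [K g]_H of right cosets of a subgroup K coincide iff g'
  lies in the double coset K g H, so A_[K g]_H = K g H. Phi is injective iff a multicell
  [K_J g]_H (J-hat subscripts dropped) is determined by its vertices [K_i g]_H, i in J,
  i.e. iff every g' lying in all the double cosets K_i g H lies in K_J g H; the reverse
  inclusion is automatic because K_J is contained in each K_i. For normal H we have
  K g H = (K H) g, so the intersection property at g is the right translate by g of the
  one at e.\<close>

definition letter :: "nat \<Rightarrow> nat \<Rightarrow> nat \<times> nat \<Rightarrow> bool" where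
  "letter d k a \<longleftrightarrow> fst a \<le> d \<and> 0 < snd a \<and> snd a < k"

lemma reduced_Nil[simp]: "reduced d k []"
  by (simp add: reduced_def)

lemma reduced_Cons:
  "reduced d k (a # w) \<longleftrightarrow> letter d k a \<and> reduced d k w \<and> (w = [] \<or> fst (hd w) \<noteq> fst a)"
  by (cases w) (auto simp: reduced_def letter_def split: prod.splits)

lemma push_reduced:
  assumes "letter d k a" "reduced d k w" shows "reduced d k (push k a w)"
proof (cases w)
  case Nil thus ?thesis using assms by (cases a) (simp add: reduced_Cons)
next
  case (Cons b w')
  obtain i m where a: "a = (i,m)" by force
  obtain j n where b: "b = (j,n)" by force
  show ?thesis using assms unfolding Cons a b
    by (auto simp: reduced_Cons letter_def)
qed

lemma foldr_push_reduced:
  assumes "reduced d k x" "reduced d k y" shows "reduced d k (foldr (push k) x y)"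
  using assms by (induction x) (auto simp: reduced_Cons intro: push_reduced)

lemma push_push:
  assumes "letter d k (i,m)" "letter d k (i,n)" "reduced d k w"
  shows "push k (i,m) (push k (i,n) w) =
     (if (m+n) mod k = 0 then w else push k (i,(m+n) mod k) w)"
proof (cases w)
  case Nil thus ?thesis by simp
next
  case (Cons b w')
  obtain j p where b: "b = (j,p)" by force
  show ?thesis
  proof (cases "j = i")
    case False thus ?thesis using Cons b by simp
  next
    case True
    have p: "0 < p" "p < k" and hw': "w' = [] \<or> fst (hd w') \<noteq> i"
      using assms(3) Cons b True by (auto simp: reduced_Cons letter_def)
    have m: "0 < m" "m < k" using assms by (auto simp: letter_def)
    have push_letter: "push k (i,q) w' = (i,q) # w'" for q
      using hw' by (cases w') auto
    have assoc: "(m + (n+p) mod k) mod k = ((m+n) mod k + p) mod k"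
      by (metis add.assoc mod_add_left_eq mod_add_right_eq)
    have cancel_both: "m = p" if "(n+p) mod k = 0" "(m+n) mod k = 0"
    proof -
      have "(m + (n+p)) mod k = p mod k" by (metis that(2) add.assoc mod_add_left_eq add_0)
      then have "m mod k = p mod k" by (metis that(1) mod_add_right_eq add_0_right)
      then show "m = p" using m p by simp
    qed
    have cancel_right: "((m+n) mod k + p) mod k = m" if "(n+p) mod k = 0"
      by (metis add.assoc add.right_neutral m(2) mod_add_left_eq mod_add_right_eq mod_less that)
    consider "(n+p) mod k = 0" "(m+n) mod k = 0" | "(n+p) mod k = 0" "(m+n) mod k \<noteq> 0"
      | "(n+p) mod k \<noteq> 0" "(m+n) mod k = 0" | "(n+p) mod k \<noteq> 0" "(m+n) mod k \<noteq> 0"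
      by blast
    then show ?thesis
    proof cases
      case 1 then show ?thesis using Cons b True push_letter cancel_both by simp
    next
      case 2 then show ?thesis using Cons b True push_letter cancel_right m by simp
    next
      case 3 then show ?thesis using Cons b True assoc p by simp
    next
      case 4 then show ?thesis using Cons b True assoc by simp
    qed
  qed
qed

lemma foldr_push_push:
  assumes "letter d k a" "reduced d k w" "reduced d k z"
  shows "foldr (push k) (push k a w) z = push k a (foldr (push k) w z)"
proof (cases w)
  case Nil thus ?thesis by (cases a) simp
next
  case (Cons b w')
  obtain i m where a: "a = (i,m)" by force
  obtain j n where b: "b = (j,n)" by force
  have w': "reduced d k w'" "letter d k b" using assms Cons by (auto simp: reduced_Cons)
  have r: "reduced d k (foldr (push k) w' z)" using w' assms foldr_push_reduced by blast
  show ?thesis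
  proof (cases "i = j")
    case False thus ?thesis using Cons a b by simp
  next
    case True
    have "push k (i,m) (push k (i,n) (foldr (push k) w' z)) =
      (if (m+n) mod k = 0 then foldr (push k) w' z else push k (i,(m+n) mod k) (foldr (push k) w' z))"
      using push_push[OF _ _ r, of i m n] assms w' a b True by simp
    thus ?thesis using Cons a b True by simp
  qed
qed

lemma foldr_push_assoc:
  assumes "reduced d k x" "reduced d k y" "reduced d k z"
  shows "foldr (push k) (foldr (push k) x y) z = foldr (push k) x (foldr (push k) y z)"
  using assms
proof (induction x)
  case Nil thus ?case by simp
next
  case (Cons a x)
  have a: "letter d k a" "reduced d k x" using Cons.prems by (auto simp: reduced_Cons)
  have "foldr (push k) (foldr (push k) (a#x) y) z = foldr (push k) (push k a (foldr (push k) x y)) z" by simp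
  also have "\<dots> = push k a (foldr (push k) (foldr (push k) x y) z)"
    using foldr_push_push a Cons.prems foldr_push_reduced by blast
  also have "\<dots> = push k a (foldr (push k) x (foldr (push k) y z))" using Cons a by simp
  finally show ?case by simp
qed

definition word_inv :: "nat \<Rightarrow> word \<Rightarrow> word" where
  "word_inv k x = rev (map (\<lambda>(i,m). (i, k - m)) x)"

lemma word_inv_reduced: "reduced d k x \<Longrightarrow> reduced d k (word_inv k x)"
  unfolding word_inv_def reduced_def
  by (auto simp: successively_rev successively_map split: prod.splits
      elim!: successively_mono)

lemma foldr_push_word_inv: "reduced d k x \<Longrightarrow> foldr (push k) (word_inv k x) x = []"
proof (induction x)
  case Nil thus ?case by (simp add: word_inv_def)
next
  case (Cons a x)
  obtain i m where a: "a = (i,m)" by force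
  have x: "reduced d k x" and m: "0<m" "m<k" using Cons.prems a by (auto simp: reduced_Cons letter_def)
  have "word_inv k (a#x) = word_inv k x @ [(i,k-m)]" by (simp add: word_inv_def a)
  hence "foldr (push k) (word_inv k (a#x)) (a#x) = foldr (push k) (word_inv k x) (push k (i,k-m) ((i,m)#x))"
    by (simp add: a)
  also have "push k (i,k-m) ((i,m)#x) = x" using m by simp
  finally show ?case using Cons.IH x by simp
qed

lemma group_Gdk: "group (Gdk d k)"
proof (rule groupI)
  fix x assume "x \<in> carrier (Gdk d k)"
  thus "\<exists>y\<in>carrier (Gdk d k). y \<otimes>\<^bsub>Gdk d k\<^esub> x = \<one>\<^bsub>Gdk d k\<^esub>"
    by (intro bexI[of _ "word_inv k x"]) (auto simp: Gdk_def word_inv_reduced foldr_push_word_inv)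
qed (auto simp: Gdk_def foldr_push_reduced foldr_push_assoc)

definition (in group) double_coset :: "'a set \<Rightarrow> 'a \<Rightarrow> 'a set \<Rightarrow> 'a set" where
  "double_coset K g H = {x \<otimes> g \<otimes> h | x h. x \<in> K \<and> h \<in> H}"

lemma (in group) double_coset_mono:
  "K \<subseteq> K' \<Longrightarrow> double_coset K g H \<subseteq> double_coset K' g H"
  unfolding double_coset_def by blast

lemma (in group) right_coset_classes_subset:
  assumes K: "subgroup K G" and H: "subgroup H G" and g: "g \<in> carrier G"
    and x: "x \<in> K" and h: "h \<in> H"
  shows "{K #> ((x \<otimes> g \<otimes> h) \<otimes> h') | h'. h' \<in> H} \<subseteq> {K #> (g \<otimes> h') | h'. h' \<in> H}"
proof
  fix C assume "C \<in> {K #> ((x \<otimes> g \<otimes> h) \<otimes> h') | h'. h' \<in> H}"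
  then obtain h' where h': "h' \<in> H" "C = K #> ((x \<otimes> g \<otimes> h) \<otimes> h')" by blast
  have xc: "x \<in> carrier G" using subgroup.mem_carrier[OF K x] .
  have hc: "h \<in> carrier G" "h' \<in> carrier G"
    using subgroup.mem_carrier[OF H h] subgroup.mem_carrier[OF H h'(1)] by auto
  have "C = (K #> x) #> (g \<otimes> (h \<otimes> h'))" using h' xc hc g K
    by (simp add: m_assoc coset_mult_assoc subgroup.subset)
  also have "K #> x = K" using coset_join2[OF xc K x] .
  finally have "C = K #> (g \<otimes> (h \<otimes> h'))" .
  moreover have "h \<otimes> h' \<in> H" using subgroup.m_closed[OF H h h'(1)] .
  ultimately show "C \<in> {K #> (g \<otimes> h') | h'. h' \<in> H}" by blast
qed

lemma (in group) right_coset_classes_eq_iff: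
  assumes K: "subgroup K G" and H: "subgroup H G" and g: "g \<in> carrier G" and g': "g' \<in> carrier G"
  shows "{K #> (g' \<otimes> h) | h. h \<in> H} = {K #> (g \<otimes> h) | h. h \<in> H} \<longleftrightarrow>
    g' \<in> double_coset K g H"
proof
  assume eq: "{K #> (g' \<otimes> h) | h. h \<in> H} = {K #> (g \<otimes> h) | h. h \<in> H}"
  have "K #> (g' \<otimes> \<one>) \<in> {K #> (g' \<otimes> h) | h. h \<in> H}" using subgroup.one_closed[OF H] by blast
  then obtain h where h: "h \<in> H" "K #> g' = K #> (g \<otimes> h)" using eq g' by auto
  have hc: "h \<in> carrier G" using subgroup.mem_carrier[OF H h(1)] .
  have "g' \<in> K #> (g \<otimes> h)" using h rcos_self[OF g' K] by simp
  then obtain x where x: "x \<in> K" "g' = x \<otimes> (g \<otimes> h)" unfolding r_coset_def by blast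
  have "x \<in> carrier G" using subgroup.mem_carrier[OF K x(1)] .
  then have "g' = x \<otimes> g \<otimes> h" using x(2) hc g by (simp add: m_assoc)
  then show "g' \<in> double_coset K g H" using x(1) h(1) unfolding double_coset_def by blast
next
  assume "g' \<in> double_coset K g H"
  then obtain x h where x: "x \<in> K" and h: "h \<in> H" and e: "g' = x \<otimes> g \<otimes> h"
    unfolding double_coset_def by blast
  have xc: "x \<in> carrier G" using subgroup.mem_carrier[OF K x] .
  have hc: "h \<in> carrier G" using subgroup.mem_carrier[OF H h] .
  have ge: "g = inv x \<otimes> g' \<otimes> inv h"
    using e xc hc g by (simp add: m_assoc inv_solve_left inv_solve_right)
  have "{K #> (g \<otimes> h') | h'. h' \<in> H} \<subseteq> {K #> (g' \<otimes> h') | h'. h' \<in> H}"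
    using right_coset_classes_subset[OF K H g' subgroup.m_inv_closed[OF K x]
        subgroup.m_inv_closed[OF H h]]
    by (simp only: ge[symmetric])
  moreover have "{K #> (g' \<otimes> h') | h'. h' \<in> H} \<subseteq> {K #> (g \<otimes> h') | h'. h' \<in> H}"
    using right_coset_classes_subset[OF K H g x h] e by simp
  ultimately show "{K #> (g' \<otimes> h) | h. h \<in> H} = {K #> (g \<otimes> h) | h. h \<in> H}" by blast
qed

lemma (in group) double_coset_normal:
  assumes N: "H \<lhd> G" and K: "subgroup K G" and g: "g \<in> carrier G" and g': "g' \<in> carrier G"
  shows "g' \<in> double_coset K g H \<longleftrightarrow> g' \<otimes> inv g \<in> double_coset K \<one> H"
proof
  assume "g' \<in> double_coset K g H"
  then obtain x h where x: "x \<in> K" and h: "h \<in> H" and e: "g' = x \<otimes> g \<otimes> h"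
    unfolding double_coset_def by blast
  have xc: "x \<in> carrier G" using subgroup.mem_carrier[OF K x] .
  have hc: "h \<in> carrier G" using subgroup.mem_carrier[OF normal_imp_subgroup[OF N] h] .
  have "g' \<otimes> inv g = x \<otimes> \<one> \<otimes> (g \<otimes> h \<otimes> inv g)" using e xc hc g by (simp add: m_assoc)
  then show "g' \<otimes> inv g \<in> double_coset K \<one> H"
    unfolding double_coset_def using x normal.inv_op_closed2[OF N g h] by blast
next
  assume "g' \<otimes> inv g \<in> double_coset K \<one> H"
  then obtain x h where x: "x \<in> K" and h: "h \<in> H" and e: "g' \<otimes> inv g = x \<otimes> \<one> \<otimes> h"
    unfolding double_coset_def by blast
  have xc: "x \<in> carrier G" using subgroup.mem_carrier[OF K x] .
  have hc: "h \<in> carrier G" using subgroup.mem_carrier[OF normal_imp_subgroup[OF N] h] .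
  have "g' = g' \<otimes> inv g \<otimes> g" using g g' by (simp add: m_assoc)
  also have "\<dots> = x \<otimes> (g \<otimes> inv g) \<otimes> h \<otimes> g" using e xc hc g by simp
  also have "\<dots> = x \<otimes> g \<otimes> (inv g \<otimes> h \<otimes> g)"
    using xc hc g by (simp only: m_assoc m_closed inv_closed)
  finally show "g' \<in> double_coset K g H"
    unfolding double_coset_def using x normal.inv_op_closed1[OF N g h] by blast
qed

abbreviation Khat :: "nat \<Rightarrow> nat \<Rightarrow> nat set \<Rightarrow> word set" where
  "Khat d k J \<equiv> Ksub d k ({0..d} - J)"

lemma Ksub_subgroup: "S \<subseteq> {0..d} \<Longrightarrow> subgroup (Ksub d k S) (Gdk d k)"
  unfolding Ksub_def
  by (rule group.generate_is_subgroup[OF group_Gdk])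
    (auto simp: alpha_def Gdk_def reduced_def)

lemma Khat_subgroup: "subgroup (Khat d k J) (Gdk d k)"
  by (rule Ksub_subgroup) auto

lemma Khat_antimono: "J' \<subseteq> J \<Longrightarrow> Khat d k J \<subseteq> Khat d k J'"
  unfolding Ksub_def by (rule group.mono_generate[OF group_Gdk]) auto

lemma cls_eq_iff_double_coset:
  assumes "subgroup H (Gdk d k)" "g \<in> carrier (Gdk d k)" "g' \<in> carrier (Gdk d k)"
  shows "cls d k H J g' = cls d k H J g \<longleftrightarrow> g' \<in> group.double_coset (Gdk d k) (Khat d k J) g H"
  unfolding cls_def by (rule group.right_coset_classes_eq_iff[OF group_Gdk Khat_subgroup assms])

lemma cls_eq_restrict:
  assumes H: "subgroup H (Gdk d k)" and g: "g \<in> carrier (Gdk d k)" and g': "g' \<in> carrier (Gdk d k)"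
    and "J' \<subseteq> J" and "cls d k H J g' = cls d k H J g"
  shows "cls d k H J' g' = cls d k H J' g"
  using assms group.double_coset_mono[OF group_Gdk[of d k] Khat_antimono[of J' J d k]]
  by (auto simp: cls_eq_iff_double_coset)

lemma Phi_cls:
  assumes H: "subgroup H (Gdk d k)" and g: "g \<in> carrier (Gdk d k)"
  shows "Phi d k H (J, cls d k H J g) = {(i, cls d k H {i} g) | i. i \<in> J}"
proof -
  define g0 where "g0 = (SOME g0. g0 \<in> carrier (Gdk d k) \<and> cls d k H J g0 = cls d k H J g)"
  have "g0 \<in> carrier (Gdk d k) \<and> cls d k H J g0 = cls d k H J g"
    unfolding g0_def by (rule someI[of _ g]) (simp add: g)
  then have g0: "g0 \<in> carrier (Gdk d k)" "cls d k H J g0 = cls d k H J g" by auto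
  have "Phi d k H (J, cls d k H J g) = {(i, cls d k H {i} g0) | i. i \<in> J}"
    unfolding Phi_def g0_def by simp
  also have "\<dots> = {(i, cls d k H {i} g) | i. i \<in> J}"
    using cls_eq_restrict[OF H g g0(1) _ g0(2)] by blast
  finally show ?thesis .
qed

lemma is_simplicial_iff_vertices_determine_cells:
  assumes H: "subgroup H (Gdk d k)"
  shows "is_simplicial d k H \<longleftrightarrow>
    (\<forall>J g. J \<noteq> {} \<and> J \<subseteq> {0..d} \<and> g \<in> carrier (Gdk d k) \<longrightarrow>
      (\<forall>g'\<in>carrier (Gdk d k). (\<forall>i\<in>J. cls d k H {i} g' = cls d k H {i} g) \<longrightarrow>
         cls d k H J g' = cls d k H J g))"
  (is "_ \<longleftrightarrow> ?vertices_determine_cells")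
proof
  assume "is_simplicial d k H"
  then show ?vertices_determine_cells
  proof (intro allI impI ballI)
    fix J g g'
    assume "J \<noteq> {} \<and> J \<subseteq> {0..d} \<and> g \<in> carrier (Gdk d k)"
      and g': "g' \<in> carrier (Gdk d k)" and vertices: "\<forall>i\<in>J. cls d k H {i} g' = cls d k H {i} g"
    then have J: "J \<noteq> {}" "J \<subseteq> {0..d}" and g: "g \<in> carrier (Gdk d k)" by auto
    have cells: "(J, cls d k H J g) \<in> multicells d k H" "(J, cls d k H J g') \<in> multicells d k H"
      using J g g' unfolding multicells_def by blast+
    have "Phi d k H (J, cls d k H J g') = Phi d k H (J, cls d k H J g)"
      unfolding Phi_cls[OF H g] Phi_cls[OF H g'] using vertices by blast
    then show "cls d k H J g' = cls d k H J g"
      using \<open>is_simplicial d k H\<close> cells unfolding is_simplicial_def inj_on_def by blast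
  qed
next
  assume determined: ?vertices_determine_cells
  show "is_simplicial d k H" unfolding is_simplicial_def
  proof (rule inj_onI)
    fix c c' assume c: "c \<in> multicells d k H" and c': "c' \<in> multicells d k H"
      and eq: "Phi d k H c = Phi d k H c'"
    from c obtain J g where J: "J \<noteq> {}" "J \<subseteq> {0..d}" and g: "g \<in> carrier (Gdk d k)"
      and c_def: "c = (J, cls d k H J g)" unfolding multicells_def by blast
    from c' obtain J' g' where g': "g' \<in> carrier (Gdk d k)"
      and c'_def: "c' = (J', cls d k H J' g')" unfolding multicells_def by blast
    have vertices: "{(i, cls d k H {i} g) | i. i \<in> J} = {(i, cls d k H {i} g') | i. i \<in> J'}"
      using eq unfolding c_def c'_def Phi_cls[OF H g] Phi_cls[OF H g'] .
    have "J' = J" using arg_cong[OF vertices, of "image fst"] by force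
    moreover have "\<forall>i\<in>J. cls d k H {i} g' = cls d k H {i} g" using vertices \<open>J' = J\<close> by blast
    ultimately show "c = c'" using determined J g g' c_def c'_def by metis
  qed
qed

lemma Inter_Acls_eq_iff:
  assumes H: "subgroup H (Gdk d k)" and J: "J \<noteq> {}" and g: "g \<in> carrier (Gdk d k)"
  shows "(\<Inter>i\<in>J. Acls d k H {i} g) = Acls d k H J g \<longleftrightarrow>
    (\<forall>g'\<in>carrier (Gdk d k). (\<forall>i\<in>J. cls d k H {i} g' = cls d k H {i} g) \<longrightarrow>
       cls d k H J g' = cls d k H J g)"
proof -
  have "Acls d k H J g \<subseteq> (\<Inter>i\<in>J. Acls d k H {i} g)"
    using cls_eq_restrict[OF H g] unfolding Acls_def by blast
  then show ?thesis using J unfolding Acls_def by blast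
qed

lemma Acls_normal:
  assumes N: "H \<lhd> Gdk d k" and g: "g \<in> carrier (Gdk d k)"
  shows "Acls d k H J g =
    {g' \<in> carrier (Gdk d k). g' \<otimes>\<^bsub>Gdk d k\<^esub> inv\<^bsub>Gdk d k\<^esub> g \<in> Acls d k H J \<one>\<^bsub>Gdk d k\<^esub>}"
proof -
  interpret group "Gdk d k" by (rule group_Gdk)
  have H: "subgroup H (Gdk d k)" using N by (rule normal_imp_subgroup)
  have "cls d k H J g' = cls d k H J g \<longleftrightarrow>
      cls d k H J (g' \<otimes>\<^bsub>Gdk d k\<^esub> inv\<^bsub>Gdk d k\<^esub> g) = cls d k H J \<one>\<^bsub>Gdk d k\<^esub>"
    if "g' \<in> carrier (Gdk d k)" for g'
    using that g double_coset_normal[OF N Khat_subgroup g that]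
    by (simp add: cls_eq_iff_double_coset[OF H])
  then show ?thesis unfolding Acls_def using g by auto
qed

lemma Inter_Acls_normal:
  assumes N: "H \<lhd> Gdk d k" and J: "J \<noteq> {}" and g: "g \<in> carrier (Gdk d k)"
    and at_one: "(\<Inter>i\<in>J. Acls d k H {i} \<one>\<^bsub>Gdk d k\<^esub>) = Acls d k H J \<one>\<^bsub>Gdk d k\<^esub>"
  shows "(\<Inter>i\<in>J. Acls d k H {i} g) = Acls d k H J g"
  unfolding Acls_normal[OF N g] using J at_one[symmetric] by auto

theorem proposition9:
  fixes d k :: nat and H :: "word set"
  assumes "1 \<le> d" and "1 \<le> k" and "subgroup H (Gdk d k)"
  shows "(is_simplicial d k H \<longleftrightarrow>
           (\<forall>J g. J \<noteq> {} \<and> J \<subseteq> {0..d} \<and> g \<in> carrier (Gdk d k) \<longrightarrow>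
              (\<Inter>i\<in>J. Acls d k H {i} g) = Acls d k H J g))
         \<and> (H \<lhd> Gdk d k \<longrightarrow>
         (is_simplicial d k H \<longleftrightarrow>
           (\<forall>J. J \<noteq> {} \<and> J \<subseteq> {0..d} \<longrightarrow>
              (\<Inter>i\<in>J. Acls d k H {i} \<one>\<^bsub>Gdk d k\<^esub>) = Acls d k H J \<one>\<^bsub>Gdk d k\<^esub>)))"
proof -
  note H = assms(3)
  have general: "is_simplicial d k H \<longleftrightarrow>
           (\<forall>J g. J \<noteq> {} \<and> J \<subseteq> {0..d} \<and> g \<in> carrier (Gdk d k) \<longrightarrow>
              (\<Inter>i\<in>J. Acls d k H {i} g) = Acls d k H J g)"
    unfolding is_simplicial_iff_vertices_determine_cells[OF H]
    by (intro all_cong1 imp_cong refl) (simp add: Inter_Acls_eq_iff[OF H])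
  moreover have "(\<forall>J g. J \<noteq> {} \<and> J \<subseteq> {0..d} \<and> g \<in> carrier (Gdk d k) \<longrightarrow>
              (\<Inter>i\<in>J. Acls d k H {i} g) = Acls d k H J g) \<longleftrightarrow>
           (\<forall>J. J \<noteq> {} \<and> J \<subseteq> {0..d} \<longrightarrow>
              (\<Inter>i\<in>J. Acls d k H {i} \<one>\<^bsub>Gdk d k\<^esub>) = Acls d k H J \<one>\<^bsub>Gdk d k\<^esub>)"
    if "H \<lhd> Gdk d k"
    using Inter_Acls_normal[OF that] monoid.one_closed[OF group.is_monoid[OF group_Gdk[of d k]]]
    by meson
  ultimately show ?thesis by simp
qed

end
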